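(* Let $\underline{L}$ be a finite lattice. Then there exists a unique DI-core of $\underline{L}$; that is, the family $DI(\underline{L})$ has exactly one smallest element with respect to set inclusion.
   Context: For $u\le v$ in a lattice $L$, $[u,v]=\{x\mid u\le x\le v\}$, $(v]=\{x\mid x\le v\}$, $[u)=\{x\mid u\le x\}$. An interval $[u,v]$ of $L$ is dismantling for $L$ if $u\neq\bot$, $v\neq\top$, $u$ is supremum-prime in $(v]$ (for all $x,y\in(v]$, $u\le x\vee y$ implies $u\le x$ or $u\le y$) and $v$ is infimum-prime in $[u)$ (for all $x,y\in[u)$, $x\wedge y\le v$ implies $x\le v$ or $y\le v$). Removing a dismantling interval from a lattice leaves a lattice (with the restricted order). $DI(\underline{L})$ is the family of all subsets of $L$ obtainable by iterated dismantling starting from $\underline{L}$: $X\in DI(\underline{L})$ iff there is a sequence $L=X_0\supseteq X_1\supseteq\cdots\supseteq X_k=X$ ($k\ge0$) such that for each $i$, $X_{i+1}=X_i\setminus S_i$ for some interval $S_i$ of the lattice $X_i$ that is dismantling for $X_i$. A smallest element of $DI(\underline{L})$ (with respect to inclusion) is called a DI-core of $\underline{L}$. *)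

theory Defs
  imports Main
begin

text \<open>All subsets X of the ambient lattice carry the restricted order.
  Joins/meets, bottom/top and intervals are taken inside X.\<close>

definition is_join_in :: "'a::order set \<Rightarrow> 'a \<Rightarrow> 'a \<Rightarrow> 'a \<Rightarrow> bool" where
  "is_join_in X x y z \<longleftrightarrow> z \<in> X \<and> x \<le> z \<and> y \<le> z \<and> (\<forall>w\<in>X. x \<le> w \<and> y \<le> w \<longrightarrow> z \<le> w)"

definition is_meet_in :: "'a::order set \<Rightarrow> 'a \<Rightarrow> 'a \<Rightarrow> 'a \<Rightarrow> bool" where
  "is_meet_in X x y z \<longleftrightarrow> z \<in> X \<and> z \<le> x \<and> z \<le> y \<and> (\<forall>w\<in>X. w \<le> x \<and> w \<le> y \<longrightarrow> w \<le> z)"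

definition is_bot_of :: "'a::order set \<Rightarrow> 'a \<Rightarrow> bool" where
  "is_bot_of X b \<longleftrightarrow> b \<in> X \<and> (\<forall>x\<in>X. b \<le> x)"

definition is_top_of :: "'a::order set \<Rightarrow> 'a \<Rightarrow> bool" where
  "is_top_of X t \<longleftrightarrow> t \<in> X \<and> (\<forall>x\<in>X. x \<le> t)"

definition interval_in :: "'a::order set \<Rightarrow> 'a \<Rightarrow> 'a \<Rightarrow> 'a set" where
  "interval_in X u v = {x \<in> X. u \<le> x \<and> x \<le> v}"

definition down_in :: "'a::order set \<Rightarrow> 'a \<Rightarrow> 'a set" where
  "down_in X v = {x \<in> X. x \<le> v}"

definition up_in :: "'a::order set \<Rightarrow> 'a \<Rightarrow> 'a set" where
  "up_in X u = {x \<in> X. u \<le> x}"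

definition sup_prime_in :: "'a::order set \<Rightarrow> 'a \<Rightarrow> bool" where
  "sup_prime_in Y u \<longleftrightarrow> (\<forall>x\<in>Y. \<forall>y\<in>Y. \<forall>z. is_join_in Y x y z \<longrightarrow> u \<le> z \<longrightarrow> u \<le> x \<or> u \<le> y)"

definition inf_prime_in :: "'a::order set \<Rightarrow> 'a \<Rightarrow> bool" where
  "inf_prime_in Y v \<longleftrightarrow> (\<forall>x\<in>Y. \<forall>y\<in>Y. \<forall>z. is_meet_in Y x y z \<longrightarrow> z \<le> v \<longrightarrow> x \<le> v \<or> y \<le> v)"

definition dismantling :: "'a::order set \<Rightarrow> 'a \<Rightarrow> 'a \<Rightarrow> bool" where
  "dismantling X u v \<longleftrightarrow> u \<in> X \<and> v \<in> X \<and> u \<le> v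
     \<and> \<not> is_bot_of X u \<and> \<not> is_top_of X v
     \<and> sup_prime_in (down_in X v) u \<and> inf_prime_in (up_in X u) v"

inductive_set DI :: "'a::order set \<Rightarrow> 'a set set" for L :: "'a set" where
  base: "L \<in> DI L"
| step: "X \<in> DI L \<Longrightarrow> dismantling X u v \<Longrightarrow> X - interval_in X u v \<in> DI L"

definition DI_core :: "'a::order set \<Rightarrow> 'a set \<Rightarrow> bool" where
  "DI_core L C \<longleftrightarrow> C \<in> DI L \<and> (\<forall>X\<in>DI L. C \<subseteq> X)"

end

theory Submission
  imports Defs
begin

text \<open>Every member of DI(L) is a sublattice of L containing its bottom and top. Let M be
  inclusion-minimal in the finite family DI(L), and let X in DI(L) contain M. A dismantling
  interval [u,v] of X meets M in the interval [u',v'] of M, where u' and v' are the least and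
  greatest elements of M in [u,v]; if nonempty, this interval is dismantling for M, so
  minimality of M forces it to be empty and M survives the removal of [u,v]. Following the
  dismantling sequences, M is contained in every member of DI(L).\<close>

definition sublattice :: "'a::lattice set \<Rightarrow> bool" where
  "sublattice X \<longleftrightarrow> (\<forall>x\<in>X. \<forall>y\<in>X. sup x y \<in> X \<and> inf x y \<in> X)"

lemma finite_inf_closed_has_least:
  fixes A :: "'a::semilattice_inf set"
  assumes "finite A" "A \<noteq> {}" "\<forall>x\<in>A. \<forall>y\<in>A. inf x y \<in> A"
  shows "\<exists>m\<in>A. \<forall>x\<in>A. m \<le> x"
proof -
  obtain m where m: "m \<in> A" "\<forall>b\<in>A. b \<le> m \<longrightarrow> b = m"
    using finite_has_minimal[OF assms(1,2)] by blast
  have "m \<le> x" if "x \<in> A" for x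
    using m assms(3) that by (metis inf.orderI inf_le1)
  with m show ?thesis by blast
qed

lemma finite_sup_closed_has_greatest:
  fixes A :: "'a::semilattice_sup set"
  assumes "finite A" "A \<noteq> {}" "\<forall>x\<in>A. \<forall>y\<in>A. sup x y \<in> A"
  shows "\<exists>m\<in>A. \<forall>x\<in>A. x \<le> m"
proof -
  obtain m where m: "m \<in> A" "\<forall>b\<in>A. m \<le> b \<longrightarrow> b = m"
    using finite_has_maximal[OF assms(1,2)] by blast
  have "x \<le> m" if "x \<in> A" for x
    using m assms(3) that by (metis sup.orderI sup_ge1)
  with m show ?thesis by blast
qed

lemma sublattice_down_in: "sublattice X \<Longrightarrow> sublattice (down_in X v)"
  by (auto simp: sublattice_def down_in_def le_infI1)

lemma sublattice_up_in: "sublattice X \<Longrightarrow> sublattice (up_in X u)"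
  by (auto simp: sublattice_def up_in_def le_supI1)

lemma sublattice_interval_in: "sublattice X \<Longrightarrow> sublattice (interval_in X u v)"
  by (auto simp: sublattice_def interval_in_def le_infI1 le_supI1)

lemma is_join_in_sublattice_iff:
  "sublattice Y \<Longrightarrow> x \<in> Y \<Longrightarrow> y \<in> Y \<Longrightarrow> is_join_in Y x y z \<longleftrightarrow> z = sup x y"
  by (auto simp: is_join_in_def sublattice_def intro: antisym)

lemma is_meet_in_sublattice_iff:
  "sublattice Y \<Longrightarrow> x \<in> Y \<Longrightarrow> y \<in> Y \<Longrightarrow> is_meet_in Y x y z \<longleftrightarrow> z = inf x y"
  by (auto simp: is_meet_in_def sublattice_def intro: antisym)

lemma sup_prime_in_sublattice_iff:
  "sublattice Y \<Longrightarrow> sup_prime_in Y u \<longleftrightarrow> (\<forall>x\<in>Y. \<forall>y\<in>Y. u \<le> sup x y \<longrightarrow> u \<le> x \<or> u \<le> y)"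
  by (simp add: sup_prime_in_def is_join_in_sublattice_iff)

lemma inf_prime_in_sublattice_iff:
  "sublattice Y \<Longrightarrow> inf_prime_in Y v \<longleftrightarrow> (\<forall>x\<in>Y. \<forall>y\<in>Y. inf x y \<le> v \<longrightarrow> x \<le> v \<or> y \<le> v)"
  by (simp add: inf_prime_in_def is_meet_in_sublattice_iff)

lemma dismantling_sublattice_iff:
  assumes "sublattice X"
  shows "dismantling X u v \<longleftrightarrow> u \<in> X \<and> v \<in> X \<and> u \<le> v
     \<and> \<not> is_bot_of X u \<and> \<not> is_top_of X v
     \<and> (\<forall>x\<in>X. \<forall>y\<in>X. x \<le> v \<longrightarrow> y \<le> v \<longrightarrow> u \<le> sup x y \<longrightarrow> u \<le> x \<or> u \<le> y)
     \<and> (\<forall>x\<in>X. \<forall>y\<in>X. u \<le> x \<longrightarrow> u \<le> y \<longrightarrow> inf x y \<le> v \<longrightarrow> x \<le> v \<or> y \<le> v)"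
proof -
  have "sup_prime_in (down_in X v) u \<longleftrightarrow>
      (\<forall>x\<in>X. \<forall>y\<in>X. x \<le> v \<longrightarrow> y \<le> v \<longrightarrow> u \<le> sup x y \<longrightarrow> u \<le> x \<or> u \<le> y)"
    unfolding sup_prime_in_sublattice_iff[OF sublattice_down_in[OF assms]] by (auto simp: down_in_def)
  moreover have "inf_prime_in (up_in X u) v \<longleftrightarrow>
      (\<forall>x\<in>X. \<forall>y\<in>X. u \<le> x \<longrightarrow> u \<le> y \<longrightarrow> inf x y \<le> v \<longrightarrow> x \<le> v \<or> y \<le> v)"
    unfolding inf_prime_in_sublattice_iff[OF sublattice_up_in[OF assms]] by (auto simp: up_in_def)
  ultimately show ?thesis by (simp only: dismantling_def)
qed

lemma sublattice_Diff_dismantling: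
  assumes X: "sublattice X" and D: "dismantling X u v"
  shows "sublattice (X - interval_in X u v)"
  unfolding sublattice_def
proof (intro ballI conjI)
  fix x y assume x: "x \<in> X - interval_in X u v" and y: "y \<in> X - interval_in X u v"
  then have "x \<in> X" "y \<in> X" by (auto simp: interval_in_def)
  with X have "sup x y \<in> X" "inf x y \<in> X" by (auto simp: sublattice_def)
  show "sup x y \<in> X - interval_in X u v"
  proof (rule ccontr)
    assume "sup x y \<notin> X - interval_in X u v"
    with \<open>sup x y \<in> X\<close> have "u \<le> sup x y" "x \<le> v" "y \<le> v"
      by (auto simp: interval_in_def)
    with D X \<open>x \<in> X\<close> \<open>y \<in> X\<close> have "u \<le> x \<or> u \<le> y"
      by (simp add: dismantling_sublattice_iff)
    with x y \<open>x \<le> v\<close> \<open>y \<le> v\<close> show False by (auto simp: interval_in_def)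
  qed
  show "inf x y \<in> X - interval_in X u v"
  proof (rule ccontr)
    assume "inf x y \<notin> X - interval_in X u v"
    with \<open>inf x y \<in> X\<close> have "inf x y \<le> v" "u \<le> x" "u \<le> y"
      by (auto simp: interval_in_def)
    with D X \<open>x \<in> X\<close> \<open>y \<in> X\<close> have "x \<le> v \<or> y \<le> v"
      by (simp add: dismantling_sublattice_iff)
    with x y \<open>u \<le> x\<close> \<open>u \<le> y\<close> show False by (auto simp: interval_in_def)
  qed
qed

lemma is_bot_of_if_below_bot: "is_bot_of X b \<Longrightarrow> u \<in> X \<Longrightarrow> u \<le> b \<Longrightarrow> is_bot_of X u"
  by (auto simp: is_bot_of_def intro: order_trans)

lemma is_top_of_if_above_top: "is_top_of X t \<Longrightarrow> v \<in> X \<Longrightarrow> t \<le> v \<Longrightarrow> is_top_of X v"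
  by (auto simp: is_top_of_def intro: order_trans)

lemma is_bot_of_Diff_dismantling:
  assumes "is_bot_of X b" "dismantling X u v"
  shows "is_bot_of (X - interval_in X u v) b"
proof -
  have "\<not> u \<le> b"
    using assms is_bot_of_if_below_bot by (auto simp: dismantling_def)
  with assms(1) show ?thesis by (auto simp: is_bot_of_def interval_in_def)
qed

lemma is_top_of_Diff_dismantling:
  assumes "is_top_of X t" "dismantling X u v"
  shows "is_top_of (X - interval_in X u v) t"
proof -
  have "\<not> t \<le> v"
    using assms is_top_of_if_above_top by (auto simp: dismantling_def)
  with assms(1) show ?thesis by (auto simp: is_top_of_def interval_in_def)
qed

lemma DI_subset: "X \<in> DI L \<Longrightarrow> X \<subseteq> L"
  by (induction rule: DI.induct) auto

lemma DI_sublattice: "X \<in> DI L \<Longrightarrow> sublattice L \<Longrightarrow> sublattice X"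
  by (induction rule: DI.induct) (auto intro: sublattice_Diff_dismantling)

lemma DI_is_bot_of: "X \<in> DI L \<Longrightarrow> is_bot_of L b \<Longrightarrow> is_bot_of X b"
  by (induction rule: DI.induct) (auto intro: is_bot_of_Diff_dismantling)

lemma DI_is_top_of: "X \<in> DI L \<Longrightarrow> is_top_of L t \<Longrightarrow> is_top_of X t"
  by (induction rule: DI.induct) (auto intro: is_top_of_Diff_dismantling)

lemma dismantling_restrict:
  assumes X: "sublattice X" and C: "sublattice C" "finite C" "C \<subseteq> X"
    and b: "b \<in> C" "is_bot_of X b" and t: "t \<in> C" "is_top_of X t"
    and D: "dismantling X u v" and ne: "interval_in C u v \<noteq> {}"
  shows "\<exists>u' v'. dismantling C u' v' \<and> interval_in C u' v' = interval_in C u v"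
proof -
  let ?I = "interval_in C u v"
  have sup_prime: "u \<le> x \<or> u \<le> y"
    if "x \<in> X" "y \<in> X" "x \<le> v" "y \<le> v" "u \<le> sup x y" for x y
    using D X that by (simp add: dismantling_sublattice_iff)
  have inf_prime: "x \<le> v \<or> y \<le> v"
    if "x \<in> X" "y \<in> X" "u \<le> x" "u \<le> y" "inf x y \<le> v" for x y
    using D X that by (simp add: dismantling_sublattice_iff)
  have I: "finite ?I" "\<forall>x\<in>?I. \<forall>y\<in>?I. inf x y \<in> ?I \<and> sup x y \<in> ?I"
    using C sublattice_interval_in[OF C(1)] by (auto simp: interval_in_def sublattice_def)
  obtain u' where u': "u' \<in> ?I" "\<forall>x\<in>?I. u' \<le> x"
    using finite_inf_closed_has_least[OF I(1) ne] I(2) by blast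
  obtain v' where v': "v' \<in> ?I" "\<forall>x\<in>?I. x \<le> v'"
    using finite_sup_closed_has_greatest[OF I(1) ne] I(2) by blast
  have "u \<le> u'" "v' \<le> v" "u' \<in> C" "v' \<in> C" "u' \<le> v'"
    using u' v' by (auto simp: interval_in_def)
  have same: "interval_in C u' v' = ?I"
  proof
    show "interval_in C u' v' \<subseteq> ?I"
      using \<open>u \<le> u'\<close> \<open>v' \<le> v\<close>
      by (auto simp: interval_in_def dest: order_trans[of u] order_trans[where z = v])
    show "?I \<subseteq> interval_in C u' v'"
      using u'(2) v'(2) by (auto simp: interval_in_def)
  qed
  have "\<not> is_bot_of C u'"
  proof
    assume "is_bot_of C u'"
    with b(1) have "u' \<le> b" by (simp add: is_bot_of_def)
    with \<open>u \<le> u'\<close> have "u \<le> b" by (rule order_trans)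
    with D b(2) show False using is_bot_of_if_below_bot by (auto simp: dismantling_def)
  qed
  moreover have "\<not> is_top_of C v'"
  proof
    assume "is_top_of C v'"
    with t(1) have "t \<le> v'" by (simp add: is_top_of_def)
    then have "t \<le> v" using \<open>v' \<le> v\<close> by (rule order_trans)
    with D t(2) show False using is_top_of_if_above_top by (auto simp: dismantling_def)
  qed
  moreover have "u' \<le> x \<or> u' \<le> y"
    if "x \<in> C" "y \<in> C" "x \<le> v'" "y \<le> v'" "u' \<le> sup x y" for x y
  proof -
    have "x \<le> v" "y \<le> v" "u \<le> sup x y"
      using that \<open>u \<le> u'\<close> \<open>v' \<le> v\<close> by (meson order_trans)+
    with that \<open>C \<subseteq> X\<close> have "u \<le> x \<or> u \<le> y" using sup_prime by blast
    with u'(2) that \<open>x \<le> v\<close> \<open>y \<le> v\<close> show ?thesis by (auto simp: interval_in_def)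
  qed
  moreover have "x \<le> v' \<or> y \<le> v'"
    if "x \<in> C" "y \<in> C" "u' \<le> x" "u' \<le> y" "inf x y \<le> v'" for x y
  proof -
    have "u \<le> x" "u \<le> y" "inf x y \<le> v"
      using that \<open>u \<le> u'\<close> \<open>v' \<le> v\<close> by (meson order_trans)+
    with that \<open>C \<subseteq> X\<close> have "x \<le> v \<or> y \<le> v" using inf_prime by blast
    with v'(2) that \<open>u \<le> x\<close> \<open>u \<le> y\<close> show ?thesis by (auto simp: interval_in_def)
  qed
  ultimately have "dismantling C u' v'"
    using C(1) \<open>u' \<in> C\<close> \<open>v' \<in> C\<close> \<open>u' \<le> v'\<close> by (simp add: dismantling_sublattice_iff)
  with same show ?thesis by blast
qed

lemma DI_minimal_subset:
  fixes L :: "'a::lattice set"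
  assumes L: "finite L" "sublattice L" "is_bot_of L b" "is_top_of L t"
    and M: "M \<in> DI L" "\<forall>Y\<in>DI L. Y \<subseteq> M \<longrightarrow> Y = M"
    and X: "X \<in> DI L"
  shows "M \<subseteq> X"
  using X
proof (induction rule: DI.induct)
  case base
  show ?case using DI_subset[OF M(1)] .
next
  case (step X u v)
  have "interval_in M u v = {}"
  proof (rule ccontr)
    assume ne: "interval_in M u v \<noteq> {}"
    have "finite M" using DI_subset[OF M(1)] L(1) by (rule finite_subset)
    have "is_bot_of M b" "is_bot_of X b" "is_top_of M t" "is_top_of X t"
      using M(1) step.hyps(1) L(3,4) by (auto intro: DI_is_bot_of DI_is_top_of)
    then have "b \<in> M" "t \<in> M" by (auto simp: is_bot_of_def is_top_of_def)
    obtain u' v' where "dismantling M u' v'" "interval_in M u' v' = interval_in M u v"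
      using dismantling_restrict[OF DI_sublattice[OF step.hyps(1) L(2)]
          DI_sublattice[OF M(1) L(2)] \<open>finite M\<close> step.IH \<open>b \<in> M\<close> \<open>is_bot_of X b\<close>
          \<open>t \<in> M\<close> \<open>is_top_of X t\<close> step.hyps(2) ne]
      by blast
    from \<open>dismantling M u' v'\<close> have "M - interval_in M u' v' \<in> DI L"
      by (rule DI.step[OF M(1)])
    with M(2) have "M - interval_in M u' v' = M" by blast
    moreover have "interval_in M u' v' \<subseteq> M" by (auto simp: interval_in_def)
    ultimately show False using ne \<open>interval_in M u' v' = interval_in M u v\<close> by blast
  qed
  with step.IH show ?case by (auto simp: interval_in_def)
qed

lemma DI_core_exists:
  fixes L :: "'a::lattice set"
  assumes L: "finite L" "sublattice L" "L \<noteq> {}"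
  shows "\<exists>C. DI_core L C"
proof -
  have "\<forall>x\<in>L. \<forall>y\<in>L. inf x y \<in> L" "\<forall>x\<in>L. \<forall>y\<in>L. sup x y \<in> L"
    using L(2) by (simp_all add: sublattice_def)
  then obtain b t where "is_bot_of L b" "is_top_of L t"
    using finite_inf_closed_has_least[OF L(1,3)] finite_sup_closed_has_greatest[OF L(1,3)]
    unfolding is_bot_of_def is_top_of_def by blast
  have "DI L \<subseteq> Pow L" using DI_subset by blast
  then have "finite (DI L)" by (rule finite_subset) (simp add: L(1))
  moreover have "DI L \<noteq> {}" using DI.base by blast
  ultimately obtain M where M: "M \<in> DI L" "\<forall>Y\<in>DI L. Y \<subseteq> M \<longrightarrow> Y = M"
    using finite_has_minimal[of "DI L"] by blast
  have "DI_core L M"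
    unfolding DI_core_def
    using DI_minimal_subset[OF L(1,2) \<open>is_bot_of L b\<close> \<open>is_top_of L t\<close> M] M(1) by blast
  then show ?thesis ..
qed

lemma DI_core_unique: "DI_core L C \<Longrightarrow> DI_core L C' \<Longrightarrow> C = C'"
  unfolding DI_core_def by (blast intro: subset_antisym)

theorem theorem2:
  shows "\<exists>!C. DI_core (UNIV :: ('a::{finite, lattice}) set) C"
proof -
  have "sublattice (UNIV :: 'a set)" by (simp add: sublattice_def)
  then obtain C where "DI_core (UNIV :: 'a set) C"
    using DI_core_exists[OF finite_UNIV] by blast
  then show ?thesis using DI_core_unique by blast
qed

end
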